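(* Let $R$ be a UFD with field of fractions $K$. Let $U \in R[X,Y]$ (polynomial ring in two variables) be such that $K[X,Y] = K[U]^{[1]}$. Then $K[U] \cap R[X,Y]$ is an inert subring of $R[X,Y]$, and $K[U] \cap R[X,Y] = R[W]$ for some element $W \in R[X,Y]$ which is transcendental over $R$ and satisfies $K[W] = K[U]$.
   Context: A subring $D$ of an integral domain $A$ is called inert if whenever $x, y \in A$ with $xy \in D \setminus \{0\}$, then $x, y \in D$. For a subring $C \subseteq D$, $D = C^{[1]}$ means $D = C[T]$ for some $T \in D$ transcendental over $C$. *)

theory Defs
  imports "HOL-Computational_Algebra.Polynomial_Factorial"
begin

text \<open>Bivariate polynomials R[X,Y] are modelled as the iterated polynomial ring
  ('a poly) poly.  Constants of R are embedded as [:[:c:]:].\<close>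

definition const2 :: "'a::zero \<Rightarrow> 'a poly poly" where
  "const2 c = [:[:c:]:]"

definition consts2 :: "'a::zero poly poly set" where
  "consts2 = range const2"

definition emb2 :: "'a::idom poly poly \<Rightarrow> 'a fract poly poly" where
  "emb2 f = map_poly (map_poly to_fract) f"

definition adjoin :: "'b::comm_ring_1 set \<Rightarrow> 'b \<Rightarrow> 'b set" where
  "adjoin C t = {poly p t | p. \<forall>i. coeff p i \<in> C}"

definition transc :: "'b::comm_ring_1 set \<Rightarrow> 'b \<Rightarrow> bool" where
  "transc C t \<longleftrightarrow> (\<forall>p. (\<forall>i. coeff p i \<in> C) \<and> poly p t = 0 \<longrightarrow> p = 0)"

definition poly_ring_1 :: "'b::comm_ring_1 set \<Rightarrow> 'b set \<Rightarrow> bool" where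
  "poly_ring_1 C D \<longleftrightarrow> (\<exists>T\<in>D. D = adjoin C T \<and> transc C T)"

definition is_subring :: "'b::comm_ring_1 set \<Rightarrow> bool" where
  "is_subring D \<longleftrightarrow> 0 \<in> D \<and> 1 \<in> D \<and> (\<forall>x\<in>D. \<forall>y\<in>D. x + y \<in> D \<and> x - y \<in> D \<and> x * y \<in> D)"

definition inert_subring :: "'b::idom set \<Rightarrow> bool" where
  "inert_subring D \<longleftrightarrow> is_subring D \<and>
     (\<forall>x y. x * y \<in> D - {0} \<longrightarrow> x \<in> D \<and> y \<in> D)"

end

(*
  Write U = d W + U(0,0) with d a nonzero constant of R and W primitive, i.e. divisible by no
  prime of R; then K[W] = K[U] and W(0,0) = 0, and W is transcendental over R as it is not
  constant.  If f in R[X,Y] lies in K[W], then f = f(0,0) + W g with g in K[W]; by Gauss's lemma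
  for the primitive W the cofactor g again has coefficients in R, and descending along the degree
  in W puts f in R[W].  Inertness comes from K[X,Y] = K[U][T]: a nonzero product lying in K[U] has
  T-degree zero, so both factors lie in K[U], and this passes to the preimage of K[U] in R[X,Y].
*)
theory Submission
  imports Defs
begin

lemma coeff_coeff_emb2: "coeff (coeff (emb2 f) i) j = to_fract (coeff (coeff f i) j)"
  by (simp add: emb2_def coeff_map_poly)

lemma emb2_0 [simp]: "emb2 0 = 0"
  and emb2_1 [simp]: "emb2 1 = 1"
  and emb2_add [simp]: "emb2 (f + g) = emb2 f + emb2 g"
  and emb2_diff [simp]: "emb2 (f - g) = emb2 f - emb2 g"
  and emb2_eq_iff [simp]: "emb2 f = emb2 g \<longleftrightarrow> f = g"
  by (auto simp: emb2_def poly_eq_iff coeff_map_poly)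

lemma emb2_eq_0_iff [simp]: "emb2 f = 0 \<longleftrightarrow> f = 0"
  using emb2_eq_iff[of f 0] by (simp del: emb2_eq_iff)

lemma emb2_mult [simp]: "emb2 (f * g) = emb2 f * emb2 g"
proof -
  have fract_poly_sum: "map_poly to_fract (sum h A) = (\<Sum>x\<in>A. map_poly to_fract (h x))"
    for h :: "nat \<Rightarrow> 'a poly" and A
    by (induction A rule: infinite_finite_induct) simp_all
  show ?thesis
    by (intro poly_eqI) (simp add: emb2_def coeff_map_poly coeff_mult fract_poly_sum)
qed

lemma emb2_pCons: "emb2 (pCons a f) = pCons (map_poly to_fract a) (emb2 f)"
  by (simp add: emb2_def map_poly_pCons)

lemma emb2_poly_map_poly: "emb2 (poly p t) = poly (map_poly emb2 p) (emb2 t)"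
  by (induction p) (simp_all add: map_poly_pCons)

lemma const2_0 [simp]: "const2 0 = 0"
  and const2_1 [simp]: "const2 1 = 1"
  by (simp_all add: const2_def one_pCons)

lemma const2_add: "const2 (a + b) = const2 a + const2 b"
  and const2_diff: "const2 (c - d) = const2 c - const2 d"
  and const2_mult: "const2 (a * b) = const2 a * const2 b"
  by (simp_all add: const2_def)

lemma const2_eq_0_iff [simp]: "const2 a = 0 \<longleftrightarrow> a = 0"
  by (simp add: const2_def)

lemma coeff_coeff_const2_mult: "coeff (coeff (const2 d * g) i) j = d * coeff (coeff g i) j"
  by (simp add: const2_def)

lemma const2_mult_pCons: "const2 c * pCons a g = pCons (smult c a) (const2 c * g)"
  by (simp add: const2_def)

lemma coeff_coeff_const2_0 [simp]: "coeff (coeff (const2 a) 0) 0 = a"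
  by (simp add: const2_def)

lemma emb2_const2 [simp]: "emb2 (const2 c) = const2 (to_fract c)"
  by (simp add: emb2_def const2_def map_poly_pCons)

lemma map_poly_emb2_const2: "map_poly emb2 (map_poly const2 p) = map_poly const2 (map_poly to_fract p)"
  by (simp add: map_poly_map_poly o_def)

lemma consts2_iff: "f \<in> consts2 \<longleftrightarrow> f = const2 (coeff (coeff f 0) 0)"
  by (auto simp: consts2_def)

lemma emb2_in_consts2_iff [simp]: "emb2 f \<in> consts2 \<longleftrightarrow> f \<in> consts2"
  by (metis consts2_iff coeff_coeff_emb2 emb2_const2 emb2_eq_iff)

lemma is_subringD:
  assumes "is_subring D" "x \<in> D" "y \<in> D"
  shows "x + y \<in> D" "x - y \<in> D" "x * y \<in> D"
  using assms unfolding is_subring_def by blast+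

lemma is_subring_sum: "is_subring D \<Longrightarrow> (\<And>i. i \<in> A \<Longrightarrow> f i \<in> D) \<Longrightarrow> sum f A \<in> D"
  unfolding is_subring_def by (induction A rule: infinite_finite_induct) auto

lemma is_subring_polys_over:
  assumes "is_subring C" shows "is_subring {p. \<forall>i. coeff p i \<in> C}"
proof -
  have "coeff (p * q) i \<in> C" if "\<forall>i. coeff p i \<in> C" "\<forall>i. coeff q i \<in> C" for p q i
    unfolding coeff_mult using assms that by (intro is_subring_sum) (auto simp: is_subring_def)
  then show ?thesis
    using assms by (auto simp: is_subring_def)
qed

lemma const_poly_in_polys_over: "is_subring C \<Longrightarrow> c \<in> C \<Longrightarrow> \<forall>i. coeff [:c:] i \<in> C"
  by (auto simp: is_subring_def coeff_pCons split: nat.split)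

lemma poly_in_subring: "is_subring D \<Longrightarrow> \<forall>i. coeff p i \<in> D \<Longrightarrow> t \<in> D \<Longrightarrow> poly p t \<in> D"
proof (induction p)
  case (pCons a p)
  then have "a \<in> D" "\<forall>i. coeff p i \<in> D"
    by (metis coeff_pCons_0, metis coeff_pCons_Suc)
  with pCons show ?case by (simp add: is_subring_def)
qed (simp add: is_subring_def)

lemma is_subring_adjoin:
  assumes "is_subring C" shows "is_subring (adjoin C t)"
proof -
  have "poly 0 t \<in> adjoin C t" "poly 1 t \<in> adjoin C t"
    using is_subring_polys_over[OF assms] unfolding adjoin_def is_subring_def by blast+
  moreover have "poly (p + q) t \<in> adjoin C t \<and> poly (p - q) t \<in> adjoin C t \<and> poly (p * q) t \<in> adjoin C t"
    if "\<forall>i. coeff p i \<in> C" "\<forall>i. coeff q i \<in> C" for p q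
    using is_subring_polys_over[OF assms] that unfolding adjoin_def is_subring_def by blast
  ultimately show ?thesis
    unfolding is_subring_def adjoin_def by auto
qed

lemma mem_adjoin_base: "is_subring C \<Longrightarrow> c \<in> C \<Longrightarrow> c \<in> adjoin C t"
  unfolding adjoin_def by (intro CollectI exI[of _ "[:c:]"]) (auto dest: const_poly_in_polys_over)

lemma mem_adjoin_generator: "is_subring C \<Longrightarrow> t \<in> adjoin C t"
  unfolding adjoin_def
  by (intro CollectI exI[of _ "[:0, 1:]"]) (auto simp: is_subring_def coeff_pCons split: nat.split)

lemma adjoin_subset: "is_subring D \<Longrightarrow> C \<subseteq> D \<Longrightarrow> t \<in> D \<Longrightarrow> adjoin C t \<subseteq> D"
  unfolding adjoin_def using poly_in_subring by blast

lemma adjoin_eq_self: "is_subring C \<Longrightarrow> t \<in> C \<Longrightarrow> adjoin C t = C"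
  using adjoin_subset[of C C t] mem_adjoin_base[of C _ t] by blast

lemma is_subring_consts2: "is_subring (consts2 :: 'b::comm_ring_1 poly poly set)"
  unfolding is_subring_def consts2_def
  by (auto simp: image_iff simp flip: const2_add const2_diff const2_mult intro: exI[of _ 0] exI[of _ 1])

lemma coeffs_in_consts2_iff: "(\<forall>i. coeff q i \<in> consts2) \<longleftrightarrow> (\<exists>p. q = map_poly const2 p)"
proof
  assume "\<forall>i. coeff q i \<in> consts2"
  then have "q = map_poly const2 (map_poly (\<lambda>c. coeff (coeff c 0) 0) q)"
    by (intro poly_eqI) (metis coeff_map_poly consts2_iff const2_0 coeff_0)
  then show "\<exists>p. q = map_poly const2 p" ..
qed (auto simp: coeff_map_poly consts2_def)

lemma adjoin_consts2: "adjoin consts2 t = range (\<lambda>p. poly (map_poly const2 p) t)"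
  unfolding adjoin_def coeffs_in_consts2_iff by blast

lemma map_poly_const2_eq_0_iff [simp]: "map_poly const2 p = 0 \<longleftrightarrow> p = 0"
  by (simp add: map_poly_eq_0_iff)

lemma transc_consts2_iff: "transc consts2 t \<longleftrightarrow> (\<forall>p. poly (map_poly const2 p) t = 0 \<longrightarrow> p = 0)"
  unfolding transc_def coeffs_in_consts2_iff by auto

lemma poly_map_const2_eq_pcompose:
  "poly (map_poly const2 p) t = pcompose (map_poly (\<lambda>c. [:c:]) p) t"
  by (simp add: pcompose_altdef map_poly_map_poly o_def const2_def[abs_def])

lemma pcompose_map_const_poly_const:
  "pcompose (map_poly (\<lambda>c. [:c:]) p) [:x:] = [:pcompose p x:]"
  by (induction p) (simp_all add: map_poly_pCons pcompose_pCons mult.commute)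

lemma transc_consts2_if_nonconstant:
  fixes t :: "'b::idom poly poly"
  assumes "t \<notin> consts2"
  shows "transc consts2 t"
  unfolding transc_consts2_iff
proof (intro allI impI)
  fix p assume "poly (map_poly const2 p) t = 0"
  then have p_t: "pcompose (map_poly (\<lambda>c. [:c:]) p) t = 0"
    by (simp add: poly_map_const2_eq_pcompose)
  show "p = 0"
  proof (cases "degree t = 0")
    case False
    then have "map_poly (\<lambda>c. [:c:]) p = 0"
      using p_t pcompose_eq_0 by blast
    then show ?thesis by (simp add: map_poly_eq_0_iff)
  next
    case True
    then obtain x where x: "t = [:x:]" by (rule degree_eq_zeroE)
    have "degree x \<noteq> 0"
    proof
      assume "degree x = 0"
      then obtain a where "x = [:a:]" by (rule degree_eq_zeroE)
      then show False using assms x by (simp add: consts2_def const2_def)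
    qed
    moreover have "pcompose p x = 0"
      using p_t by (simp add: x pcompose_map_const_poly_const)
    ultimately show ?thesis using pcompose_eq_0 by blast
  qed
qed

text \<open>[:0, 1:] is the outer and [:[:0, 1:]:] the inner variable: the former forces T to have
  positive outer degree, and then the latter cannot be a polynomial in T.\<close>
lemma adjoin_consts2_ne_UNIV: "adjoin consts2 T \<noteq> (UNIV :: 'b::idom poly poly set)"
proof
  assume all: "adjoin consts2 T = UNIV"
  have "\<exists>p. f = pcompose (map_poly (\<lambda>c. [:c:]) p) T" for f
  proof -
    have "f \<in> adjoin consts2 T" using all by simp
    then show ?thesis unfolding adjoin_consts2 poly_map_const2_eq_pcompose by blast
  qed
  then obtain p q where
    p: "[:0, 1:] = pcompose (map_poly (\<lambda>c. [:c:]) p) T" and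
    q: "[:[:0, 1:]:] = pcompose (map_poly (\<lambda>c. [:c:]) q) T"
    by blast
  from arg_cong[OF p, of degree] have "degree T \<noteq> 0"
    by (simp add: degree_pcompose)
  moreover from arg_cong[OF q, of degree] have "degree q * degree T = 0"
    by (simp add: degree_pcompose degree_map_poly)
  ultimately have "degree q = 0"
    by simp
  then obtain c where "q = [:c:]"
    by (rule degree_eq_zeroE)
  with q show False
    by (simp add: map_poly_pCons split: if_splits)
qed

lemma inert_subring_if_polynomial_ring:
  fixes D :: "'b::idom set"
  assumes D: "is_subring D" and T: "UNIV = adjoin D T" "transc D T"
  shows "inert_subring D"
proof -
  have left: "x \<in> D" if xy: "x * y \<in> D - {0}" for x y
  proof -
    from T(1) obtain P Q where
      P: "\<forall>i. coeff P i \<in> D" "x = poly P T" and Q: "\<forall>i. coeff Q i \<in> D" "y = poly Q T"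
      unfolding adjoin_def by blast
    have "P * Q - [:x * y:] \<in> {p. \<forall>i. coeff p i \<in> D}"
      using P(1) Q(1) const_poly_in_polys_over[OF D, of "x * y"] xy
      by (intro is_subringD(2,3)[OF is_subring_polys_over[OF D]]) simp_all
    moreover have "poly (P * Q - [:x * y:]) T = 0"
      using P(2) Q(2) by simp
    ultimately have "P * Q - [:x * y:] = 0"
      using T(2) unfolding transc_def by blast
    then have "P * Q = [:x * y:]"
      by simp
    moreover have "P \<noteq> 0" "Q \<noteq> 0"
      using xy P(2) Q(2) by auto
    ultimately have "degree P = 0"
      using degree_mult_eq[of P Q] by simp
    then obtain p where "P = [:p:]"
      by (rule degree_eq_zeroE)
    with P show "x \<in> D"
      by (metis coeff_pCons_0 poly_pCons poly_0 mult_zero_right add.right_neutral)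
  qed
  have "x \<in> D \<and> y \<in> D" if "x * y \<in> D - {0}" for x y
    using left[of x y] left[of y x] that by (simp add: mult.commute)
  with D show ?thesis
    unfolding inert_subring_def by blast
qed

lemma inert_subring_emb2_vimage:
  assumes "inert_subring D"
  shows "inert_subring {f. emb2 f \<in> D}"
proof -
  from assms have D: "is_subring D" and inert: "\<And>x y. x * y \<in> D - {0} \<Longrightarrow> x \<in> D \<and> y \<in> D"
    unfolding inert_subring_def by blast+
  have "is_subring {f. emb2 f \<in> D}"
    using D is_subringD[OF D] unfolding is_subring_def by simp
  moreover have "x \<in> {f. emb2 f \<in> D} \<and> y \<in> {f. emb2 f \<in> D}"
    if "x * y \<in> {f. emb2 f \<in> D} - {0}" for x y
    using inert[of "emb2 x" "emb2 y"] that by simp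
  ultimately show ?thesis
    unfolding inert_subring_def by blast
qed

lemma adjoin_consts2_affine:
  fixes w :: "'b::field poly poly"
  assumes "c \<noteq> 0"
  shows "adjoin consts2 (const2 c * w + const2 e) = adjoin consts2 w"
proof -
  have base: "consts2 \<subseteq> adjoin consts2 t" for t :: "'b poly poly"
    using mem_adjoin_base[OF is_subring_consts2] by blast
  have mem: "const2 a \<in> adjoin consts2 t" for a and t :: "'b poly poly"
    using base by (auto simp: consts2_def)
  note closed = is_subringD[OF is_subring_adjoin[OF is_subring_consts2]]
  note gen = mem_adjoin_generator[OF is_subring_consts2]
  have "w = const2 (inverse c) * ((const2 c * w + const2 e) - const2 e)"
    using assms by (simp flip: mult.assoc const2_mult)
  then have "w \<in> adjoin consts2 (const2 c * w + const2 e)"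
    by (metis closed(2,3) gen mem)
  moreover have "const2 c * w + const2 e \<in> adjoin consts2 w"
    by (intro closed(1,3) gen mem)
  ultimately show ?thesis
    by (intro equalityI adjoin_subset is_subring_adjoin is_subring_consts2 base)
qed

definition primitive2 :: "'a::factorial_semiring poly poly \<Rightarrow> bool" where
  "primitive2 W \<longleftrightarrow> (\<forall>p. prime p \<longrightarrow> \<not> const2 p dvd W)"

lemma primitive2_decomposition:
  fixes f :: "'a::{factorial_semiring,idom} poly poly"
  assumes "coeff (coeff f i) j \<noteq> 0"
  obtains d W where "d \<noteq> 0" "f = const2 d * W" "primitive2 W"
  using assms
proof (induction "size (prime_factorization (coeff (coeff f i) j))" arbitrary: f rule: less_induct)
  case less
  show ?case
  proof (cases "primitive2 f")
    case True
    then show ?thesis using less.prems(1)[of 1 f] by simp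
  next
    case False
    then obtain p g where p: "prime p" and f: "f = const2 p * g"
      unfolding primitive2_def by blast
    have fg: "coeff (coeff f i) j = p * coeff (coeff g i) j"
      unfolding f by (rule coeff_coeff_const2_mult)
    with less.prems(2) have g: "coeff (coeff g i) j \<noteq> 0"
      by simp
    with p fg have "size (prime_factorization (coeff (coeff g i) j))
        < size (prime_factorization (coeff (coeff f i) j))"
      by (simp add: prime_factorization_mult prime_factorization_prime)
    then show ?thesis
    proof (rule less.hyps[OF _ _ g])
      fix d W assume "d \<noteq> 0" "g = const2 d * W" "primitive2 W"
      with p f show ?thesis
        by (intro less.prems(1)[of "p * d" W]) (simp_all add: const2_mult mult.assoc)
    qed
  qed
qed

lemma nonconstant_primitive2_decomposition:
  fixes f :: "'a::{factorial_semiring,idom} poly poly"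
  assumes "f \<notin> consts2"
  obtains d W where "d \<noteq> 0" "f = const2 d * W + const2 (coeff (coeff f 0) 0)"
    "primitive2 W" "coeff (coeff W 0) 0 = 0" "W \<notin> consts2"
proof -
  define r where "r = coeff (coeff f 0) 0"
  have "f - const2 r \<noteq> 0"
    using assms consts2_iff r_def by auto
  then obtain i where "coeff (f - const2 r) i \<noteq> 0"
    by (meson leading_coeff_0_iff)
  then obtain j where "coeff (coeff (f - const2 r) i) j \<noteq> 0"
    by (meson leading_coeff_0_iff)
  then obtain d W where d: "d \<noteq> 0" and W: "f - const2 r = const2 d * W" "primitive2 W"
    by (rule primitive2_decomposition)
  have "d * coeff (coeff W 0) 0 = 0"
    using arg_cong[OF W(1), of "\<lambda>g. coeff (coeff g 0) 0"]
    by (simp add: r_def coeff_coeff_const2_mult)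
  with d have W00: "coeff (coeff W 0) 0 = 0"
    by simp
  have f: "f = const2 d * W + const2 r"
    using W(1) by (simp add: algebra_simps)
  have "W \<notin> consts2"
  proof
    assume "W \<in> consts2"
    then obtain w where "W = const2 w"
      by (auto simp: consts2_def)
    with f have "f = const2 (d * w + r)"
      by (simp add: const2_add const2_mult)
    with assms show False
      by (simp add: consts2_def)
  qed
  show ?thesis
    by (rule that[OF d _ W(2) W00 \<open>W \<notin> consts2\<close>]) (fold r_def, rule f)
qed

lemma const2_dvd_primitive2_mult:
  fixes W h :: "'a::{factorial_semiring,idom} poly poly"
  assumes "primitive2 W"
  shows "d \<noteq> 0 \<Longrightarrow> const2 d dvd W * h \<Longrightarrow> const2 d dvd h"
proof (induction d arbitrary: h rule: prime_divisors_induct)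
  case (unit u)
  then have "const2 u dvd 1"
    unfolding const2_def by (simp add: is_unit_const_poly_iff)
  then show ?case
    by (meson dvd_trans one_dvd)
next
  case (factor p x)
  have x: "x \<noteq> 0"
    using factor.prems by auto
  have p: "const2 p \<noteq> 0"
    using factor.hyps by (simp add: const2_def)
  have "prime_elem (const2 p)"
    using factor.hyps unfolding const2_def by (simp add: prime_elem_const_poly_iff prime_imp_prime_elem)
  moreover have "const2 p dvd W * h"
    using factor.prems(2) unfolding const2_mult using dvd_mult_left by blast
  moreover have "\<not> const2 p dvd W"
    using assms factor.hyps unfolding primitive2_def by blast
  ultimately have "const2 p dvd h"
    using prime_elem_dvd_mult_iff by blast
  then obtain h' where h': "h = const2 p * h'" ..
  have "const2 p * const2 x dvd const2 p * (W * h')"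
    using factor.prems(2) unfolding const2_mult h' by (simp add: ac_simps)
  with p have "const2 x dvd W * h'"
    by simp
  with factor.IH x have "const2 x dvd h'"
    by blast
  then show ?case
    unfolding h' const2_mult by simp
qed simp

lemma fract_poly_clear_denominators:
  "\<exists>d h. d \<noteq> 0 \<and> smult (to_fract d) (p :: 'a::idom fract poly) = map_poly to_fract h"
proof (induction p)
  case 0
  show ?case by (intro exI[of _ 1] exI[of _ 0]) simp
next
  case (pCons a p)
  then obtain d h where dh: "d \<noteq> 0" "smult (to_fract d) p = map_poly to_fract h"
    by blast
  obtain n m where a: "a = Fract n m" "m \<noteq> 0"
    by (cases a) auto
  have "smult (to_fract (d * m)) (pCons a p) = map_poly to_fract (pCons (n * d) (smult m h))"
    using dh a by (simp add: map_poly_pCons Fract_conv_to_fract mult_ac flip: dh(2))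
  with dh a show ?case
    by (intro exI[of _ "d * m"] exI) auto
qed

lemma emb2_clear_denominators:
  "\<exists>d h. d \<noteq> 0 \<and> const2 (to_fract d) * (g :: 'a::idom fract poly poly) = emb2 h"
proof (induction g)
  case 0
  show ?case by (intro exI[of _ 1] exI[of _ 0]) simp
next
  case (pCons a g)
  then obtain d h where dh: "d \<noteq> 0" "const2 (to_fract d) * g = emb2 h"
    by blast
  obtain m b where mb: "m \<noteq> 0" "smult (to_fract m) a = map_poly to_fract b"
    using fract_poly_clear_denominators by blast
  have "const2 (to_fract (d * m)) * pCons a g
      = pCons (smult (to_fract d) (smult (to_fract m) a)) (const2 (to_fract m) * (const2 (to_fract d) * g))"
    unfolding const2_mult_pCons by (simp add: const2_mult mult_ac)
  also have "\<dots> = emb2 (pCons (smult d b) (const2 m * h))"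
    by (simp add: emb2_pCons dh(2) mb(2))
  finally have "const2 (to_fract (d * m)) * pCons a g = emb2 (pCons (smult d b) (const2 m * h))" .
  with dh mb show ?case
    by (intro exI[of _ "d * m"] exI) auto
qed

lemma emb2_cofactor_of_primitive2:
  fixes W f :: "'a::{factorial_semiring,idom} poly poly"
  assumes W: "primitive2 W" and g: "emb2 W * g = emb2 f"
  obtains h where "g = emb2 h"
proof -
  obtain d h where d: "d \<noteq> 0" and h: "const2 (to_fract d) * g = emb2 h"
    using emb2_clear_denominators by blast
  have "emb2 (W * h) = emb2 (const2 d * f)"
    by (simp flip: h g add: ac_simps)
  then have "W * h = const2 d * f"
    by (simp only: emb2_eq_iff)
  then have "const2 d dvd W * h"
    by simp
  then obtain h' where h': "h = const2 d * h'"
    using const2_dvd_primitive2_mult[OF W d] by blast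
  have "const2 (to_fract d) * g = const2 (to_fract d) * emb2 h'"
    by (simp add: h h')
  with d have "g = emb2 h'"
    by simp
  then show ?thesis ..
qed

lemma emb2_vimage_adjoin_primitive2:
  fixes W :: "'a::{factorial_semiring,idom} poly poly"
  assumes W: "primitive2 W" and W00: "coeff (coeff W 0) 0 = 0"
  shows "{f. emb2 f \<in> adjoin consts2 (emb2 W)} = adjoin consts2 W"
proof (intro equalityI subsetI)
  note closed = is_subringD[OF is_subring_adjoin[OF is_subring_consts2]]
  fix f assume "f \<in> {f. emb2 f \<in> adjoin consts2 (emb2 W)}"
  then obtain q where "emb2 f = poly (map_poly const2 q) (emb2 W)"
    unfolding adjoin_consts2 by auto
  then show "f \<in> adjoin consts2 W"
  proof (induction q arbitrary: f)
    case 0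
    then show ?case
      using mem_adjoin_base[OF is_subring_consts2, of 0] by (simp add: consts2_def)
  next
    case (pCons a q)
    define g' where "g' = poly (map_poly const2 q) (emb2 W)"
    define r where "r = coeff (coeff f 0) 0"
    have f: "emb2 f = const2 a + emb2 W * g'"
      using pCons.prems by (simp add: g'_def map_poly_pCons)
    have "to_fract r = a"
      using arg_cong[OF f, of "\<lambda>g. coeff (coeff g 0) 0"]
      by (simp add: r_def coeff_coeff_emb2 coeff_mult_0 W00 const2_def)
    with f have "emb2 W * g' = emb2 (f - const2 r)"
      by simp
    then obtain g where g: "g' = emb2 g"
      using emb2_cofactor_of_primitive2[OF W] by blast
    with f \<open>to_fract r = a\<close> have "emb2 f = emb2 (const2 r + W * g)"
      by simp
    then have "f = const2 r + W * g"
      by (simp only: emb2_eq_iff)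
    moreover have "g \<in> adjoin consts2 W"
      using pCons.IH g g'_def by simp
    moreover have "const2 r \<in> adjoin consts2 W"
      by (rule mem_adjoin_base[OF is_subring_consts2]) (simp add: consts2_def)
    ultimately show ?case
      using closed(1,3) mem_adjoin_generator[OF is_subring_consts2] by metis
  qed
next
  fix f assume "f \<in> adjoin consts2 W"
  then obtain p where "f = poly (map_poly const2 p) W"
    unfolding adjoin_consts2 by auto
  then have "emb2 f = poly (map_poly const2 (map_poly to_fract p)) (emb2 W)"
    by (simp add: emb2_poly_map_poly map_poly_emb2_const2)
  then show "f \<in> {f. emb2 f \<in> adjoin consts2 (emb2 W)}"
    unfolding adjoin_consts2 by auto
qed

theorem lemma5p1:
  fixes U :: "'a::{factorial_semiring, idom} poly poly"
  assumes "poly_ring_1 (adjoin consts2 (emb2 U)) (UNIV :: 'a fract poly poly set)"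
  shows "inert_subring {f :: 'a poly poly. emb2 f \<in> adjoin consts2 (emb2 U)}
     \<and> (\<exists>W :: 'a poly poly.
          {f. emb2 f \<in> adjoin consts2 (emb2 U)} = adjoin consts2 W
          \<and> transc consts2 W
          \<and> adjoin consts2 (emb2 W) = adjoin consts2 (emb2 U))"
proof -
  have KU: "is_subring (adjoin consts2 (emb2 U))"
    by (rule is_subring_adjoin[OF is_subring_consts2])
  obtain T where T: "UNIV = adjoin (adjoin consts2 (emb2 U)) T" "transc (adjoin consts2 (emb2 U)) T"
    using assms unfolding poly_ring_1_def by blast
  have "U \<notin> consts2"
  proof
    assume "U \<in> consts2"
    then have "adjoin consts2 (emb2 U) = consts2"
      by (simp add: adjoin_eq_self is_subring_consts2)
    with T(1) adjoin_consts2_ne_UNIV show False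
      by metis
  qed
  then obtain d W where d: "d \<noteq> 0" and U: "U = const2 d * W + const2 (coeff (coeff U 0) 0)"
    and W: "primitive2 W" "coeff (coeff W 0) 0 = 0" "W \<notin> consts2"
    by (rule nonconstant_primitive2_decomposition)
  have "emb2 U = const2 (to_fract d) * emb2 W + const2 (to_fract (coeff (coeff U 0) 0))"
    by (subst U) simp
  with d have KW: "adjoin consts2 (emb2 W) = adjoin consts2 (emb2 U)"
    by (simp add: adjoin_consts2_affine)
  show ?thesis
    using inert_subring_emb2_vimage[OF inert_subring_if_polynomial_ring[OF KU T]]
      emb2_vimage_adjoin_primitive2[OF W(1,2)] transc_consts2_if_nonconstant[OF W(3)] KW
    by auto
qed

end
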